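(* There is an absolute constant $c>0$ such that for every $k\ge 1$, every parity decision tree that computes $\mathsf{MAJ}_3^{\otimes k}$ has depth at least $c\cdot 2.25^k$; i.e., the parity decision tree depth of $\mathsf{MAJ}_3^{\otimes k}$ is $\Omega(2.25^k)$.
   Context: $\mathsf{MAJ}_3:\{-1,1\}^3\to\{-1,1\}$ is $\mathsf{MAJ}_3(x)=(-1)^{\mathbf{1}[x_1+x_2+x_3<0]}$. For $k\ge2$, $\mathsf{MAJ}_3^{\otimes k}:\{-1,1\}^{3^k}\to\{-1,1\}$ is defined by $\mathsf{MAJ}_3^{\otimes k}(x)=\mathsf{MAJ}_3\big(\mathsf{MAJ}_3^{\otimes k-1}(x_1,\dots,x_{3^{k-1}}),\mathsf{MAJ}_3^{\otimes k-1}(x_{3^{k-1}+1},\dots,x_{2\cdot3^{k-1}}),\mathsf{MAJ}_3^{\otimes k-1}(x_{2\cdot 3^{k-1}+1},\dots,x_{3^k})\big)$, with $\mathsf{MAJ}_3^{\otimes 1}=\mathsf{MAJ}_3$. A parity decision tree is a rooted full binary tree whose internal nodes are labelled by subsets $S$ of the variable indices, whose two outgoing edges are labelled $-1$ and $1$, and whose leaves are labelled by values in $\{-1,1\}$; an input $x$ follows from a node labelled $S$ the edge labelled $\prod_{i\in S}x_i$. It computes $f$ if every input $x$ reaches a leaf labelled $f(x)$; its depth is the maximum number of internal nodes on a root-to-leaf path. *)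

theory Defs
  imports Complex_Main
begin

(* Boolean inputs are encoded as functions x :: nat => int with x i in {-1,1}
   for the relevant indices i < n (0-based; paper index i+1). *)

definition maj3 :: "int \<Rightarrow> int \<Rightarrow> int \<Rightarrow> int" where
  "maj3 a b c = (if a + b + c < 0 then -1 else 1)"

fun majk :: "nat \<Rightarrow> (nat \<Rightarrow> int) \<Rightarrow> nat \<Rightarrow> int" where
  "majk 0 x off = x off"
| "majk (Suc k) x off =
     maj3 (majk k x off) (majk k x (off + 3^k)) (majk k x (off + 2 * 3^k))"

definition MAJ :: "nat \<Rightarrow> (nat \<Rightarrow> int) \<Rightarrow> int" where
  "MAJ k x = majk k x 0"

datatype pdt = Leaf int | Node "nat set" pdt pdt

fun pdt_eval :: "pdt \<Rightarrow> (nat \<Rightarrow> int) \<Rightarrow> int" where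
  "pdt_eval (Leaf b) x = b"
| "pdt_eval (Node S tm tp) x = (if (\<Prod>i\<in>S. x i) = -1 then pdt_eval tm x else pdt_eval tp x)"

fun pdt_depth :: "pdt \<Rightarrow> nat" where
  "pdt_depth (Leaf b) = 0"
| "pdt_depth (Node S tm tp) = Suc (max (pdt_depth tm) (pdt_depth tp))"

fun pdt_wf :: "nat \<Rightarrow> pdt \<Rightarrow> bool" where
  "pdt_wf n (Leaf b) = (b \<in> {-1, 1})"
| "pdt_wf n (Node S tm tp) = (S \<subseteq> {..<n} \<and> pdt_wf n tm \<and> pdt_wf n tp)"

definition pm_inputs :: "nat \<Rightarrow> (nat \<Rightarrow> int) set" where
  "pm_inputs n = {x. \<forall>i<n. x i \<in> {-1, 1}}"

definition pdt_computes :: "nat \<Rightarrow> pdt \<Rightarrow> ((nat \<Rightarrow> int) \<Rightarrow> int) \<Rightarrow> bool" where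
  "pdt_computes n T f \<longleftrightarrow> pdt_wf n T \<and> (\<forall>x\<in>pm_inputs n. pdt_eval T x = f x)"

end

theory Submission imports Defs begin

text \<open>
  Granularity of the Fourier spectrum: if a parity decision tree of depth d computes f on n
  variables, then each sum of f(x) * chi_U(x) over the cube {-1,1}^n is a multiple of 2^(n-d),
  because at a node querying chi_S, twice f * chi_U is a signed sum of f' * chi_U and
  f' * chi_(sym_diff S U) for the two subtrees f'. For f = MAJ_3^(k) and U the set of all
  3^k variables, the identity 2 MAJ_3(a,b,c) = a + b + c - abc together with the factorisation
  of chi_U over the three blocks gives 2 t_(k+1) = - t_k^3 for these sums t_k, whence
  |t_k| = 2^((3^k+1)/2). So 3^k - d <= (3^k+1)/2, i.e. d >= (3^k-1)/2 >= (9/4)^k / 3.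
\<close>

definition bit_sign :: "bool \<Rightarrow> int" where
  "bit_sign v = (if v then -1 else 1)"

definition signs :: "(nat \<Rightarrow> bool) \<Rightarrow> nat \<Rightarrow> int" where
  "signs b i = bit_sign (b i)"

definition chi :: "nat set \<Rightarrow> (nat \<Rightarrow> bool) \<Rightarrow> int" where
  "chi U b = (\<Prod>i\<in>U. bit_sign (b i))"

text \<open>\<open>cube_sum lo m F b\<close> sums \<open>F\<close> over all ways of overwriting \<open>b\<close> on \<open>{lo..<lo+m}\<close>;
  for \<open>F b = f (signs b) * chi U b\<close> and \<open>lo = 0\<close> it is \<open>2^m\<close> times the Fourier coefficient
  of \<open>f\<close> at \<open>U\<close>.\<close>

fun cube_sum :: "nat \<Rightarrow> nat \<Rightarrow> ((nat \<Rightarrow> bool) \<Rightarrow> 'a::comm_ring_1) \<Rightarrow> (nat \<Rightarrow> bool) \<Rightarrow> 'a" where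
  "cube_sum lo 0 F = F"
| "cube_sum lo (Suc m) F = cube_sum lo m (\<lambda>b. F (b(lo+m:=True)) + F (b(lo+m:=False)))"

definition ignores :: "((nat \<Rightarrow> bool) \<Rightarrow> 'a) \<Rightarrow> nat set \<Rightarrow> bool" where
  "ignores F I \<longleftrightarrow> (\<forall>b i v. i \<in> I \<longrightarrow> F (b(i:=v)) = F b)"

lemma ignores_subset: "ignores F J \<Longrightarrow> I \<subseteq> J \<Longrightarrow> ignores F I"
  unfolding ignores_def by blast

lemma ignores_mult: "ignores F I \<Longrightarrow> ignores G I \<Longrightarrow> ignores (\<lambda>b. F b * G b) I"
  unfolding ignores_def by simp

lemma cube_sum_cmult: "cube_sum lo m (\<lambda>b. a * F b) b0 = a * cube_sum lo m F b0"
proof (induction m arbitrary: F b0)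
  case (Suc m)
  then show ?case by (simp add: distrib_left[symmetric])
qed simp

lemma cube_sum_add: "cube_sum lo m (\<lambda>b. F b + G b) b0 = cube_sum lo m F b0 + cube_sum lo m G b0"
proof (induction m arbitrary: F G b0)
  case (Suc m)
  then show ?case by (simp add: ac_simps)
qed simp

lemma cube_sum_zero: "cube_sum lo m (\<lambda>b. 0) = (\<lambda>b. 0)"
  using cube_sum_cmult[of lo m 0] by fastforce

lemma cube_sum_diff: "cube_sum lo m (\<lambda>b. F b - G b) b0 = cube_sum lo m F b0 - cube_sum lo m G b0"
  using cube_sum_add[of lo m F "\<lambda>b. - 1 * G b" b0] cube_sum_cmult[of lo m "- 1" G b0] by simp

lemma cube_sum_split: "cube_sum lo (m + p) F = cube_sum lo m (cube_sum (lo + m) p F)"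
  by (induction p arbitrary: F) (simp_all add: add.assoc)

lemma cube_sum_mult_ignored:
  assumes "ignores A {lo..<lo+m}"
  shows "cube_sum lo m (\<lambda>b. A b * F b) b0 = A b0 * cube_sum lo m F b0"
  using assms
proof (induction m arbitrary: F b0)
  case (Suc m)
  then have "ignores A {lo..<lo+m}" by (auto intro: ignores_subset)
  moreover have "(\<lambda>b. A (b(lo+m:=True)) * F (b(lo+m:=True)) + A (b(lo+m:=False)) * F (b(lo+m:=False)))
      = (\<lambda>b. A b * (F (b(lo+m:=True)) + F (b(lo+m:=False))))"
    using Suc.prems by (simp add: ignores_def distrib_left)
  ultimately show ?case using Suc.IH by simp
qed simp

lemma ignores_cube_sum: "ignores F I \<Longrightarrow> ignores (cube_sum lo m F) (I \<union> {lo..<lo+m})"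
proof (induction m arbitrary: F I)
  case (Suc m)
  define F' where "F' = (\<lambda>b. F (b(lo+m:=True)) + F (b(lo+m:=False)))"
  have "ignores F' (I \<union> {lo+m})"
    unfolding ignores_def
  proof (intro allI impI)
    fix b i v
    assume i: "i \<in> I \<union> {lo+m}"
    have "F (b(i:=v, lo+m:=w)) = F (b(lo+m:=w))" if "i \<noteq> lo + m" for w
      using i that Suc.prems fun_upd_twist[OF that, of b v w] by (auto simp: ignores_def)
    then show "F' (b(i:=v)) = F' b"
      by (cases "i = lo + m") (auto simp: F'_def)
  qed
  then have "ignores (cube_sum lo m F') (I \<union> {lo+m} \<union> {lo..<lo+m})" by (rule Suc.IH)
  moreover have "I \<union> {lo+m} \<union> {lo..<lo+m} = I \<union> {lo..<lo + Suc m}" by auto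
  ultimately show ?case by (simp add: F'_def)
qed simp

lemma cube_sum_block_mult:
  assumes F: "ignores F (- {lo..<lo+m})" and H: "ignores H (- {lo+m..<lo+m+p})"
  shows "cube_sum lo (m + p) (\<lambda>b. F b * H b) b0 = cube_sum lo m F b0 * cube_sum (lo+m) p H b0"
proof -
  have "ignores F {lo+m..<lo+m+p}"
    using F by (rule ignores_subset) auto
  then have "cube_sum (lo+m) p (\<lambda>b. F b * H b) = (\<lambda>b. F b * cube_sum (lo+m) p H b)"
    by (intro ext cube_sum_mult_ignored)
  moreover have "ignores (cube_sum (lo+m) p H) {lo..<lo+m}"
    using ignores_cube_sum[OF H] by (rule ignores_subset) auto
  ultimately show ?thesis
    using cube_sum_mult_ignored[of "cube_sum (lo+m) p H" lo m F b0]
    by (simp add: cube_sum_split mult.commute)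
qed

lemma cube_sum_block_mult3:
  assumes "ignores F0 (- {lo..<lo+n})" "ignores F1 (- {lo+n..<lo+2*n})"
    and "ignores F2 (- {lo+2*n..<lo+3*n})"
  shows "cube_sum lo (3*n) (\<lambda>b. F0 b * F1 b * F2 b) b0
       = cube_sum lo n F0 b0 * cube_sum (lo+n) n F1 b0 * cube_sum (lo+2*n) n F2 b0"
proof -
  have "- {lo+n..<lo+n+2*n} \<subseteq> - {lo+n..<lo+2*n}" "- {lo+n..<lo+n+2*n} \<subseteq> - {lo+2*n..<lo+3*n}"
    by auto
  then have "ignores (\<lambda>b. F1 b * F2 b) (- {lo+n..<lo+n+2*n})"
    using assms(2,3) by (blast intro: ignores_mult ignores_subset)
  then have "cube_sum lo (n + 2*n) (\<lambda>b. F0 b * (F1 b * F2 b)) b0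
      = cube_sum lo n F0 b0 * cube_sum (lo+n) (n + n) (\<lambda>b. F1 b * F2 b) b0"
    using cube_sum_block_mult[OF assms(1)] by (simp add: mult_2)
  also have "cube_sum (lo+n) (n + n) (\<lambda>b. F1 b * F2 b) b0
      = cube_sum (lo+n) n F1 b0 * cube_sum (lo+2*n) n F2 b0"
    using cube_sum_block_mult[of F1 "lo+n" n F2 n b0] assms(2,3) by (simp add: eval_nat_numeral add.assoc)
  finally show ?thesis by (simp add: mult.assoc)
qed

lemma chi_upd_notin: "j \<notin> U \<Longrightarrow> chi U (b(j:=v)) = chi U b"
  unfolding chi_def by (rule prod.cong) auto

lemma chi_upd_in: "finite U \<Longrightarrow> j \<in> U \<Longrightarrow> chi U (b(j:=v)) = bit_sign v * chi (U - {j}) b"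
  unfolding chi_def by (simp add: prod.remove)

lemma chi_square: "chi U b * chi U b = 1"
  unfolding chi_def prod.distrib[symmetric] by (rule prod.neutral) (simp add: bit_sign_def)

lemma chi_mult_chi: "finite S \<Longrightarrow> finite U \<Longrightarrow> chi S b * chi U b = chi (sym_diff S U) b"
proof -
  assume f: "finite S" "finite U"
  have S: "chi S b = chi (S - U) b * chi (S \<inter> U) b"
    unfolding chi_def using f by (subst prod.union_disjoint[symmetric]) (auto intro: prod.cong)
  have U: "chi U b = chi (U - S) b * chi (S \<inter> U) b"
    unfolding chi_def using f by (subst prod.union_disjoint[symmetric]) (auto intro: prod.cong)
  have "chi (sym_diff S U) b = chi (S - U) b * chi (U - S) b"
    unfolding chi_def using f by (subst prod.union_disjoint) auto
  then show ?thesis unfolding S U using chi_square[of "S \<inter> U" b] by (simp add: algebra_simps)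
qed

lemma chi_concat: "a \<le> b \<Longrightarrow> b \<le> c \<Longrightarrow> chi {a..<c} x = chi {a..<b} x * chi {b..<c} x"
  unfolding chi_def by (simp add: prod.atLeastLessThan_concat)

lemma ignores_chi: "ignores (chi U) (- U)"
  unfolding ignores_def using chi_upd_notin by auto

lemma cube_sum_chi_dvd: "finite U \<Longrightarrow> 2^m dvd cube_sum lo m (chi U) b0"
proof (induction m arbitrary: b0)
  case (Suc m)
  show ?case
  proof (cases "lo + m \<in> U")
    case True
    then have "(\<lambda>b. chi U (b(lo+m:=True)) + chi U (b(lo+m:=False))) = (\<lambda>b. 0)"
      using Suc.prems by (simp add: chi_upd_in bit_sign_def)
    then show ?thesis by (simp add: cube_sum_zero)
  next
    case False
    then have "(\<lambda>b. chi U (b(lo+m:=True)) + chi U (b(lo+m:=False))) = (\<lambda>b. 2 * chi U b)"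
      by (simp add: chi_upd_notin)
    then show ?thesis using Suc.IH[OF Suc.prems] by (simp add: cube_sum_cmult)
  qed
qed simp

lemma cube_sum_chi_block: "0 < m \<Longrightarrow> cube_sum lo m (chi {lo..<lo+m}) b0 = 0"
proof -
  assume "0 < m"
  then obtain m' where m: "m = Suc m'" by (cases m) auto
  then have "(\<lambda>b. chi {lo..<lo+m} (b(lo+m':=True)) + chi {lo..<lo+m} (b(lo+m':=False))) = (\<lambda>b. 0)"
    by (simp add: chi_upd_in bit_sign_def)
  then show ?thesis using m by (simp add: cube_sum_zero)
qed

lemma prod_signs: "(\<Prod>i\<in>S. signs b i) = chi S b"
  by (simp add: signs_def chi_def)

lemma signs_in_pm_inputs: "signs b \<in> pm_inputs n"
  unfolding pm_inputs_def signs_def bit_sign_def by auto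

lemma pdt_eval_Node_chi:
  assumes "finite S" "finite U"
  shows "2 * (pdt_eval (Node S tm tp) (signs b) * chi U b) =
     pdt_eval tm (signs b) * chi U b + pdt_eval tp (signs b) * chi U b
     + pdt_eval tp (signs b) * chi (sym_diff S U) b
     - pdt_eval tm (signs b) * chi (sym_diff S U) b"
proof -
  have "chi S b = 1 \<or> chi S b = -1"
    using chi_square[of S b] by (simp add: zmult_eq_1_iff)
  then show ?thesis
    unfolding chi_mult_chi[OF assms, symmetric] by (auto simp: prod_signs algebra_simps)
qed

lemma pdt_granularity:
  "pdt_wf n T \<Longrightarrow> U \<subseteq> {..<n} \<Longrightarrow>
     2^(n - pdt_depth T) dvd cube_sum 0 n (\<lambda>b. pdt_eval T (signs b) * chi U b) b0"
proof (induction T arbitrary: U b0)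
  case (Leaf c)
  then have "finite U" using finite_subset by blast
  then show ?case using cube_sum_chi_dvd[of U n 0 b0] by (simp add: cube_sum_cmult)
next
  case (Node S tm tp)
  let ?d = "pdt_depth (Node S tm tp)"
  define coeff where "coeff T W = cube_sum 0 n (\<lambda>b. pdt_eval T (signs b) * chi W b) b0" for T W
  define V where "V = sym_diff S U"
  have S: "S \<subseteq> {..<n}" and wf: "pdt_wf n tm" "pdt_wf n tp" using Node.prems by auto
  then have "finite S" "finite U" using Node.prems finite_subset by blast+
  then have node: "2 * coeff (Node S tm tp) U = coeff tm U + coeff tp U + coeff tp V - coeff tm V"
    unfolding coeff_def V_def
    by (simp add: cube_sum_cmult[symmetric] pdt_eval_Node_chi cube_sum_add cube_sum_diff
        del: pdt_eval.simps)
  have V: "V \<subseteq> {..<n}" using S Node.prems unfolding V_def by auto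
  show ?case
  proof (cases "?d \<le> n")
    case True
    have subtree: "(2::int)^(n - ?d + 1) dvd coeff T' W" if "T' \<in> {tm, tp}" "W \<subseteq> {..<n}" for T' W
    proof -
      have "(2::int)^(n - ?d + 1) dvd 2^(n - pdt_depth T')"
        by (rule le_imp_power_dvd) (use that True in auto)
      moreover have "2^(n - pdt_depth T') dvd coeff T' W"
        using that Node.IH wf unfolding coeff_def by auto
      ultimately show ?thesis by (rule dvd_trans)
    qed
    have "(2::int)^(n - ?d + 1) dvd 2 * coeff (Node S tm tp) U"
      unfolding node using subtree[OF _ Node.prems(2)] subtree[OF _ V] by (intro dvd_add dvd_diff) auto
    then show ?thesis unfolding coeff_def by (simp add: mult.commute)
  qed simp
qed

lemma double_maj3: "a \<in> {-1,1} \<Longrightarrow> b \<in> {-1,1} \<Longrightarrow> c \<in> {-1,1} \<Longrightarrow> 2 * maj3 a b c = a + b + c - a*b*c"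
  by (auto simp: maj3_def)

lemma majk_signs_pm: "majk k (signs b) off \<in> {-1, 1}"
  by (cases k) (auto simp: signs_def bit_sign_def maj3_def)

lemma majk_cong:
  "(\<And>i. off \<le> i \<Longrightarrow> i < off + 3^k \<Longrightarrow> x i = y i) \<Longrightarrow> majk k x off = majk k y off"
proof (induction k arbitrary: off)
  case (Suc k)
  have "majk k x (off + j * 3^k) = majk k y (off + j * 3^k)" if "j < 3" for j
  proof -
    have bound: "j * 3^k + 3^k \<le> 3^Suc k" using that by (simp add: mult_le_mono1 flip: mult_Suc)
    show ?thesis by (intro Suc.IH Suc.prems; use bound in linarith)
  qed
  from this[of 0] this[of 1] this[of 2] show ?case by simp
qed simp

definition majk_chi :: "nat \<Rightarrow> nat \<Rightarrow> (nat \<Rightarrow> bool) \<Rightarrow> int" where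
  "majk_chi k off b = majk k (signs b) off * chi {off..<off+3^k} b"

lemma ignores_majk_chi: "ignores (majk_chi k off) (- {off..<off+3^k})"
  unfolding ignores_def majk_chi_def
proof (intro allI impI)
  fix b i v
  assume i: "i \<in> - {off..<off+3^k}"
  then have "majk k (signs (b(i:=v))) off = majk k (signs b) off"
    by (intro majk_cong) (auto simp: signs_def)
  then show "majk k (signs (b(i:=v))) off * chi {off..<off+3^k} (b(i:=v))
           = majk k (signs b) off * chi {off..<off+3^k} b"
    using i chi_upd_notin by auto
qed

text \<open>Every term on the right is a product of one factor per block, so that
  \<open>cube_sum_block_mult3\<close> applies to it.\<close>

lemma majk_chi_Suc:
  fixes k A :: nat and b :: "nat \<Rightarrow> bool"
  defines "n \<equiv> 3^k"
  defines "P j \<equiv> majk_chi k (A + j*n) b" and "c j \<equiv> chi {A + j*n..<A + j*n + n} b"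
  shows "2 * majk_chi (Suc k) A b = P 0 * c 1 * c 2 + c 0 * P 1 * c 2 + c 0 * c 1 * P 2 - P 0 * P 1 * P 2"
proof -
  define m where "m j = majk k (signs b) (A + j*n)" for j
  have P: "P j = m j * c j" for j
    unfolding P_def m_def c_def majk_chi_def n_def by (simp add: algebra_simps)
  have e: "A + 2*n = A+n+n" "A + 3*n = A+n+n+n" by simp_all
  have chi: "chi {A..<A + 3*n} b = c 0 * c 1 * c 2"
    unfolding c_def e
    using chi_concat[of A "A+n" "A+n+n+n"] chi_concat[of "A+n" "A+n+n" "A+n+n+n"] by simp
  have maj: "2 * majk (Suc k) (signs b) A = m 0 + m 1 + m 2 - m 0 * m 1 * m 2"
    unfolding m_def n_def using majk_signs_pm by (simp add: double_maj3)
  have "2 * majk_chi (Suc k) A b = (2 * majk (Suc k) (signs b) A) * chi {A..<A + 3*n} b"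
    unfolding majk_chi_def n_def by (simp del: majk.simps)
  also have "\<dots> = (m 0 + m 1 + m 2 - m 0 * m 1 * m 2) * (c 0 * c 1 * c 2)"
    by (simp only: maj chi)
  also have "\<dots> = P 0 * c 1 * c 2 + c 0 * P 1 * c 2 + c 0 * c 1 * P 2 - P 0 * P 1 * P 2"
    unfolding P by (simp add: algebra_simps)
  finally show ?thesis .
qed

definition maj_top_coeff :: "nat \<Rightarrow> int" where
  "maj_top_coeff k = (-1)^k * 2^((3^k + 1) div 2)"

lemma maj_top_coeff_Suc: "2 * maj_top_coeff (Suc k) = - (maj_top_coeff k ^ 3)"
proof -
  define e :: nat where "e = (3^k + 1) div 2"
  have "odd ((3::nat)^k)" by simp
  then have "2 * e = 3^k + 1" unfolding e_def by presburger
  then have exp: "(3^Suc k + 1) div 2 = 3*e - 1" and "3*e = Suc (3*e - 1)" by auto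
  then have "2 * (2::int)^(3*e - 1) = (2^e)^3"
    by (metis power_Suc power_mult mult.commute)
  moreover have "((-1::int)^k)^3 = (-1)^k" by (cases "even k") auto
  ultimately show ?thesis
    unfolding maj_top_coeff_def exp e_def[symmetric] by (simp add: power_mult_distrib)
qed

lemma abs_maj_top_coeff: "\<bar>maj_top_coeff k\<bar> = 2^((3^k + 1) div 2)"
  by (simp add: maj_top_coeff_def abs_mult power_abs)

lemma cube_sum_majk_chi: "cube_sum A (3^k) (majk_chi k A) b0 = maj_top_coeff k"
proof (induction k arbitrary: A b0)
  case 0
  have "majk_chi 0 A = (\<lambda>b. 1)" by (auto simp: majk_chi_def signs_def chi_def bit_sign_def)
  then show ?case by (simp add: maj_top_coeff_def)
next
  case (Suc k)
  define n where "n = (3::nat)^k"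
  define t where "t = maj_top_coeff k"
  define P where "P j = majk_chi k (A + j*n)" for j
  define c where "c j = chi {A + j*n..<A + j*n + n}" for j
  have blk: "A + (j+1)*n = A + j*n + n" for j by simp
  have ign: "ignores (P j) (- {A + j*n..<A + (j+1)*n})" "ignores (c j) (- {A + j*n..<A + (j+1)*n})"
    for j unfolding blk unfolding P_def c_def n_def by (rule ignores_majk_chi ignores_chi)+
  have sums: "cube_sum (A + j*n) n (P j) b0 = t" "cube_sum (A + j*n) n (c j) b0 = 0" for j
    unfolding P_def c_def n_def t_def using Suc.IH cube_sum_chi_block[of "3^k" "A + j*3^k"] by simp_all
  have block: "cube_sum A (3*n) (\<lambda>b. F0 b * F1 b * F2 b) b0
       = cube_sum A n F0 b0 * cube_sum (A+n) n F1 b0 * cube_sum (A+2*n) n F2 b0"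
    if "F0 \<in> {P 0, c 0}" "F1 \<in> {P 1, c 1}" "F2 \<in> {P 2, c 2}" for F0 F1 F2
    using that ign[of 0] ign[of 1] ign[of 2] by (intro cube_sum_block_mult3) (auto simp: mult_2)
  have "2 * cube_sum A (3*n) (majk_chi (Suc k) A) b0
      = cube_sum A (3*n) (\<lambda>b. P 0 b * c 1 b * c 2 b + c 0 b * P 1 b * c 2 b + c 0 b * c 1 b * P 2 b
          - P 0 b * P 1 b * P 2 b) b0"
    unfolding cube_sum_cmult[symmetric] P_def c_def n_def by (simp only: majk_chi_Suc)
  also have "\<dots> = - (t^3)"
    using block[of "P 0" "c 1" "c 2"] block[of "c 0" "P 1" "c 2"] block[of "c 0" "c 1" "P 2"]
      block[of "P 0" "P 1" "P 2"] sums[of 0] sums[of 1] sums[of 2]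
    by (simp add: cube_sum_add cube_sum_diff power3_eq_cube)
  finally show ?case
    using maj_top_coeff_Suc[of k] unfolding n_def t_def by simp
qed

theorem theorem2:
  shows "\<exists>c::real. c > 0 \<and> (\<forall>k::nat. k \<ge> 1 \<longrightarrow>
           (\<forall>T. pdt_computes (3^k) T (MAJ k) \<longrightarrow> real (pdt_depth T) \<ge> c * (9 / 4) ^ k))"
proof (intro exI[of _ "1/3"] conjI allI impI)
  fix k :: nat and T
  assume k: "1 \<le> k" and "pdt_computes (3^k) T (MAJ k)"
  then have wf: "pdt_wf (3^k) T" and ev: "\<forall>x\<in>pm_inputs (3^k). pdt_eval T x = MAJ k x"
    unfolding pdt_computes_def by auto
  have "(\<lambda>b. pdt_eval T (signs b) * chi {..<3^k} b) = majk_chi k 0"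
    using ev signs_in_pm_inputs by (auto simp: majk_chi_def MAJ_def lessThan_atLeast0)
  then have "(2::int)^(3^k - pdt_depth T) dvd maj_top_coeff k"
    using pdt_granularity[OF wf, of "{..<3^k}" "\<lambda>_. False"] cube_sum_majk_chi[of 0 k] by simp
  then have "(2::int)^(3^k - pdt_depth T) dvd 2^((3^k + 1) div 2)"
    by (metis abs_maj_top_coeff dvd_abs_iff)
  then have "3^k - pdt_depth T \<le> (3^k + 1) div 2"
    by (simp only: dvd_power_iff) simp
  moreover have "2 * ((3^k + 1) div 2) \<le> (3::nat)^k + 1" by simp
  ultimately have "3^k \<le> 2 * pdt_depth T + 1" by linarith
  then have "real (3^k) \<le> real (2 * pdt_depth T + 1)" by (rule of_nat_mono)
  then have "(3::real)^k \<le> 2 * real (pdt_depth T) + 1" by simp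
  moreover have "(9/4::real)^k \<le> 3^k" by (rule power_mono) auto
  moreover have "(3::real) \<le> 3^k" using power_increasing[OF k, of "3::real"] by simp
  ultimately show "1/3 * (9/4) ^ k \<le> real (pdt_depth T)" by linarith
qed simp

end
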